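(* Suppose that there exist absolute constants $c_1'>1$, $c_2'>0$, $c_3'>0$ and $c_4'>0$ such that \begin{align*} \frac{1}{c_1'}\, d_n^2(\lambda_0,\lambda_1)\le \frac{1}{n}\mathrm{KL}\big(\mathsf{P}^{(n)}_{\lambda_0}, \mathsf{P}^{(n)}_{\lambda_1}\big)\le c_1'\, d_n^2(\lambda_0,\lambda_1) \end{align*} and \begin{align*} \mathsf{P}_{\lambda_0}^{(n)}\exp\Big\{t\Big(\log\frac{q_n(\lambda_0,Y^{(n)})}{q_n(\lambda_1,Y^{(n)})} - \mathrm{KL}\big(\mathsf{P}^{(n)}_{\lambda_0}, \mathsf{P}^{(n)}_{\lambda_1}\big)\Big)\Big\}\le c_2'\exp\big(c_3't^2n\, d_n^2(\lambda_0,\lambda_1)\big) \end{align*} for any $t\in[-c_4',c_4']$, any $\lambda_0,\lambda_1\in\Lambda_n$ and any sufficiently large $n\in\mathbb{N}$. Then there exist absolute constants $\rho_\circ\in(0,1)$, $\rho_{+}>1$, $a_2\ge a_1\in\mathbb{R}$ and $c_2\ge c_1>0$ such that \begin{align*} a_1+c_1 n d_n^2(\lambda_0,\lambda_1)\le \mathsf{D}_{\rho_\circ}\big(\mathsf{P}^{(n)}_{\lambda_0},\mathsf{P}^{(n)}_{\lambda_1}\big),\qquad \mathsf{D}_{\rho_{+}}\big(\mathsf{P}^{(n)}_{\lambda_0},\mathsf{P}^{(n)}_{\lambda_1}\big)\le a_2+c_2 n d_n^2(\lambda_0,\lambda_1) \end{align*} for any $\lambda_0,\lambda_1\in\Lambda_n$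 and any sufficiently large $n$.
   Context: For each $n\in\mathbb{N}$ a sample $Y^{(n)}$ takes values in a measurable space $\mathfrak{Y}_n$ with a $\sigma$-finite reference measure $\mu_n$. The natural parameter space $\Lambda_n$ is equipped with a metric $d_n$, and $q_n:\Lambda_n\times\mathfrak{Y}_n\to(0,\infty)$ is a likelihood with $\int q_n(\lambda,y)\,\mu_n(dy)=1$; $\mathsf{P}^{(n)}_\lambda(dy)=q_n(\lambda,y)\mu_n(dy)$ and $\mathsf{P}^{(n)}_\lambda g$ denotes expectation of $g$ under $\mathsf{P}^{(n)}_\lambda$. $\mathrm{KL}(\mathsf{P}_1,\mathsf{P}_2)=\int\log(d\mathsf{P}_1/d\mathsf{P}_2)\,d\mathsf{P}_1$, and for $\rho\in(0,1)\cup(1,\infty)$ the Rényi divergence is $\mathsf{D}_\rho(\mathsf{P}_1,\mathsf{P}_2)=\frac{1}{\rho-1}\log\int (d\mathsf{P}_1/d\mathsf{P}_2)^{\rho-1}d\mathsf{P}_1$ (both $+\infty$ if $\mathsf{P}_1\not\ll\mathsf{P}_2$). *)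

theory Defs
  imports "HOL-Analysis.Analysis"
begin

text \<open>Kullback-Leibler divergence between the laws with densities f and g
  (w.r.t. the reference measure M): the integral of f * ln (f/g), split into
  positive and negative parts (the negative part is always finite for probability
  densities), so the value lies in the extended reals and may be +infinity.\<close>
definition KL_dens :: "'a measure \<Rightarrow> ('a \<Rightarrow> real) \<Rightarrow> ('a \<Rightarrow> real) \<Rightarrow> ereal" where
  "KL_dens M f g =
     enn2ereal (\<integral>\<^sup>+ y. ennreal (f y * max 0 (ln (f y / g y))) \<partial>M)
   - enn2ereal (\<integral>\<^sup>+ y. ennreal (f y * max 0 (- ln (f y / g y))) \<partial>M)"

text \<open>Renyi divergence of order rho (rho \<noteq> 1) between the laws with densities f and g:
  1/(rho-1) * ln (integral of (f/g)^(rho-1) d P_f) = 1/(rho-1) * ln (integral of f^rho g^(1-rho) dM),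
  with value +infinity when rho > 1 and the integral diverges.\<close>
definition renyi_dens :: "real \<Rightarrow> 'a measure \<Rightarrow> ('a \<Rightarrow> real) \<Rightarrow> ('a \<Rightarrow> real) \<Rightarrow> ereal" where
  "renyi_dens \<rho> M f g =
     (let I = \<integral>\<^sup>+ y. ennreal (f y * (f y / g y) powr (\<rho> - 1)) \<partial>M
      in if I = \<infinity> then (if \<rho> > 1 then \<infinity> else - \<infinity>)
         else ereal (ln (enn2real I) / (\<rho> - 1)))"

end

theory Submission
  imports Defs
begin

text \<open>Let \<open>I(t)\<close> be the integral of \<open>f (f/g)^t\<close>, so that the Renyi divergence of order
  \<open>1 + t\<close> is \<open>ln I(t) / t\<close>, and let \<open>J(t)\<close> be the integral of \<open>f exp (t (ln (f/g) - K))\<close>, the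
  centred exponential moment of the log-likelihood ratio.  Pointwise
  \<open>f (f/g)^t = exp (t K) f exp (t (ln (f/g) - K))\<close>, hence \<open>I(t) = exp (t K) J(t)\<close> and
  \<open>D\<^sub>1\<^sub>+\<^sub>t = K + ln J(t) / t\<close>.  Take \<open>K\<close> to be the KL divergence, which is of order
  \<open>n d\<^sup>2\<close>, and bound \<open>J(t) \<le> c\<^sub>2' exp (c\<^sub>3' t\<^sup>2 n d\<^sup>2)\<close>.  At \<open>t = c\<^sub>4'\<close> this gives the upper
  bound; at \<open>t = -s\<close> the division by \<open>t < 0\<close> reverses the inequality and gives
  \<open>D\<^sub>1\<^sub>-\<^sub>s \<ge> (1/c\<^sub>1' - c\<^sub>3' s) n d\<^sup>2 - ln c\<^sub>2' / s\<close>, whose slope is positive once \<open>s\<close> is small.\<close>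

lemma ereal_divide_bounded_obtain_real:
  assumes "ereal a \<le> X / ereal r" "X / ereal r \<le> ereal b" "r > 0"
  obtains K where "X = ereal K" "a \<le> K / r" "K / r \<le> b"
proof (cases X)
  case (real K)
  then show ?thesis
    using assms that by simp
next
  case PInf
  then show ?thesis
    using assms by simp
next
  case MInf
  then show ?thesis
    using assms by simp
qed

locale positive_density_pair =
  fixes M :: "'a measure" and f g :: "'a \<Rightarrow> real"
  assumes f_measurable [measurable]: "f \<in> borel_measurable M"
    and g_measurable [measurable]: "g \<in> borel_measurable M"
    and f_pos: "\<And>y. y \<in> space M \<Longrightarrow> f y > 0"
    and g_pos: "\<And>y. y \<in> space M \<Longrightarrow> g y > 0"
    and f_nn_integral: "(\<integral>\<^sup>+ y. ennreal (f y) \<partial>M) = 1"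
begin

lemma ratio_powr_eq_exp_moment:
  assumes "y \<in> space M"
  shows "f y * (f y / g y) powr t = exp (t * K) * (f y * exp (t * (ln (f y / g y) - K)))"
proof -
  have "f y > 0" "g y > 0"
    using f_pos g_pos assms by auto
  then have "(f y / g y) powr t = exp (t * ln (f y / g y))"
    by (simp add: powr_def)
  also have "\<dots> = exp (t * K) * exp (t * (ln (f y / g y) - K))"
    by (simp add: algebra_simps flip: exp_add)
  finally show ?thesis
    by simp
qed

lemma nn_integral_ratio_powr_eq_exp_moment:
  "(\<integral>\<^sup>+ y. ennreal (f y * (f y / g y) powr t) \<partial>M)
     = ennreal (exp (t * K)) * (\<integral>\<^sup>+ y. ennreal (f y * exp (t * (ln (f y / g y) - K))) \<partial>M)"
proof -
  have "(\<integral>\<^sup>+ y. ennreal (f y * (f y / g y) powr t) \<partial>M)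
      = (\<integral>\<^sup>+ y. ennreal (exp (t * K)) * ennreal (f y * exp (t * (ln (f y / g y) - K))) \<partial>M)"
    by (intro nn_integral_cong)
      (simp add: ratio_powr_eq_exp_moment[of _ t K] ennreal_mult f_pos less_imp_le)
  also have "\<dots> = ennreal (exp (t * K)) * (\<integral>\<^sup>+ y. ennreal (f y * exp (t * (ln (f y / g y) - K))) \<partial>M)"
    by (intro nn_integral_cmult) measurable
  finally show ?thesis .
qed

lemma nn_integral_ratio_powr_nonzero:
  "(\<integral>\<^sup>+ y. ennreal (f y * (f y / g y) powr t) \<partial>M) \<noteq> 0"
proof
  have pos: "0 < f y * (f y / g y) powr t" if "y \<in> space M" for y
    using f_pos[OF that] g_pos[OF that] by (intro mult_pos_pos) auto
  assume "(\<integral>\<^sup>+ y. ennreal (f y * (f y / g y) powr t) \<partial>M) = 0"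
  then have "AE y in M. ennreal (f y * (f y / g y) powr t) = 0"
    by (subst (asm) nn_integral_0_iff_AE) measurable
  then have "AE y in M. ennreal (f y) = 0"
    using AE_space
  proof eventually_elim
    case (elim y)
    then show ?case
      using pos[of y] by (simp add: ennreal_eq_0_iff)
  qed
  then have "(\<integral>\<^sup>+ y. ennreal (f y) \<partial>M) = 0"
    by (simp add: nn_integral_0_iff_AE)
  then show False
    using f_nn_integral by simp
qed

lemma ln_nn_integral_ratio_powr_le:
  assumes moment: "(\<integral>\<^sup>+ y. ennreal (f y * exp (t * (ln (f y / g y) - K))) \<partial>M) \<le> ennreal B"
  shows "(\<integral>\<^sup>+ y. ennreal (f y * (f y / g y) powr t) \<partial>M) \<noteq> \<infinity>"
    and "ln (enn2real (\<integral>\<^sup>+ y. ennreal (f y * (f y / g y) powr t) \<partial>M)) \<le> t * K + ln B"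
proof -
  let ?I = "\<integral>\<^sup>+ y. ennreal (f y * (f y / g y) powr t) \<partial>M"
  have I_le: "?I \<le> ennreal (exp (t * K)) * ennreal B"
    unfolding nn_integral_ratio_powr_eq_exp_moment[of t K] by (intro mult_left_mono moment) simp
  moreover have "ennreal (exp (t * K)) * ennreal B \<noteq> \<infinity>"
    by (simp add: ennreal_mult_eq_top_iff)
  ultimately show I_finite: "?I \<noteq> \<infinity>"
    unfolding infinity_ennreal_def by (rule neq_top_trans[rotated])
  have I_pos: "0 < enn2real ?I"
    using I_finite nn_integral_ratio_powr_nonzero[of t]
    by (simp add: enn2real_positive_iff less_top order_neq_le_trans)
  have "B > 0"
  proof (rule ccontr)
    assume "\<not> B > 0"
    then have "?I = 0"
      using I_le by (simp add: ennreal_neg)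
    then show False
      using I_pos by simp
  qed
  have "enn2real ?I \<le> exp (t * K) * B"
    using enn2real_mono[OF I_le] \<open>B > 0\<close> by (simp add: ennreal_mult[symmetric])
  then have "ln (enn2real ?I) \<le> ln (exp (t * K) * B)"
    using I_pos by simp
  then show "ln (enn2real ?I) \<le> t * K + ln B"
    using \<open>B > 0\<close> by (simp add: ln_mult)
qed

lemma renyi_dens_le_of_exp_moment:
  assumes "t > 0"
    and "(\<integral>\<^sup>+ y. ennreal (f y * exp (t * (ln (f y / g y) - K))) \<partial>M) \<le> ennreal B"
  shows "renyi_dens (1 + t) M f g \<le> ereal (K + ln B / t)"
proof -
  note I = ln_nn_integral_ratio_powr_le[OF assms(2)]
  have "ln (enn2real (\<integral>\<^sup>+ y. ennreal (f y * (f y / g y) powr t) \<partial>M)) / t \<le> (t * K + ln B) / t"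
    using I(2) \<open>t > 0\<close> by (intro divide_right_mono) auto
  then show ?thesis
    using I(1) \<open>t > 0\<close> by (simp add: renyi_dens_def Let_def add_divide_distrib)
qed

lemma renyi_dens_ge_of_exp_moment:
  assumes "s > 0"
    and "(\<integral>\<^sup>+ y. ennreal (f y * exp (- s * (ln (f y / g y) - K))) \<partial>M) \<le> ennreal B"
  shows "ereal (K - ln B / s) \<le> renyi_dens (1 - s) M f g"
proof -
  note I = ln_nn_integral_ratio_powr_le[OF assms(2)]
  have "(- s * K + ln B) / - s \<le> ln (enn2real (\<integral>\<^sup>+ y. ennreal (f y * (f y / g y) powr - s) \<partial>M)) / - s"
    using I(2) \<open>s > 0\<close> by (intro divide_right_mono_neg) auto
  then show ?thesis
    using I(1) \<open>s > 0\<close> by (simp add: renyi_dens_def Let_def diff_divide_distrib)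
qed

lemma renyi_dens_le_linear:
  assumes "t > 0" "c2 > 0" "K \<le> c1 * x"
    and "(\<integral>\<^sup>+ y. ennreal (f y * exp (t * (ln (f y / g y) - K))) \<partial>M) \<le> ennreal (c2 * exp (c3 * t\<^sup>2 * x))"
  shows "renyi_dens (1 + t) M f g \<le> ereal (\<bar>ln c2\<bar> / t + (c1 + c3 * t) * x)"
proof -
  have "ln (c2 * exp (c3 * t\<^sup>2 * x)) / t = ln c2 / t + c3 * t * x"
    using assms(1,2) by (simp add: ln_mult field_simps power2_eq_square)
  moreover have "ln c2 / t \<le> \<bar>ln c2\<bar> / t"
    using assms(1) by (intro divide_right_mono) auto
  ultimately have "K + ln (c2 * exp (c3 * t\<^sup>2 * x)) / t \<le> \<bar>ln c2\<bar> / t + (c1 + c3 * t) * x"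
    using assms(3) by (simp add: algebra_simps)
  then have "ereal (K + ln (c2 * exp (c3 * t\<^sup>2 * x)) / t) \<le> ereal (\<bar>ln c2\<bar> / t + (c1 + c3 * t) * x)"
    by simp
  with renyi_dens_le_of_exp_moment[OF assms(1,4)] show ?thesis
    by (rule order_trans)
qed

lemma renyi_dens_ge_linear:
  assumes "s > 0" "c2 > 0" "x / c1 \<le> K"
    and "(\<integral>\<^sup>+ y. ennreal (f y * exp (- s * (ln (f y / g y) - K))) \<partial>M) \<le> ennreal (c2 * exp (c3 * s\<^sup>2 * x))"
  shows "ereal (- \<bar>ln c2\<bar> / s + (1 / c1 - c3 * s) * x) \<le> renyi_dens (1 - s) M f g"
proof -
  have "ln (c2 * exp (c3 * s\<^sup>2 * x)) / s = ln c2 / s + c3 * s * x"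
    using assms(1,2) by (simp add: ln_mult field_simps power2_eq_square)
  moreover have "ln c2 / s \<le> \<bar>ln c2\<bar> / s"
    using assms(1) by (intro divide_right_mono) auto
  ultimately have "- \<bar>ln c2\<bar> / s + (1 / c1 - c3 * s) * x \<le> K - ln (c2 * exp (c3 * s\<^sup>2 * x)) / s"
    using assms(3) by (simp add: algebra_simps)
  then have "ereal (- \<bar>ln c2\<bar> / s + (1 / c1 - c3 * s) * x) \<le> ereal (K - ln (c2 * exp (c3 * s\<^sup>2 * x)) / s)"
    by simp
  also have "\<dots> \<le> renyi_dens (1 - s) M f g"
    by (rule renyi_dens_ge_of_exp_moment[OF assms(1,4)])
  finally show ?thesis .
qed

lemma renyi_dens_bounds_of_KL_bounds:
  assumes "r > 0" "0 < s" "s \<le> c4" "c2 > 0"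
    and KL_lower: "ereal (z / c1) \<le> KL_dens M f g / ereal r"
    and KL_upper: "KL_dens M f g / ereal r \<le> ereal (c1 * z)"
    and moment: "\<forall>t\<in>{-c4..c4}.
      (\<integral>\<^sup>+ y. ennreal (f y * exp (t * (ln (f y / g y) - real_of_ereal (KL_dens M f g)))) \<partial>M)
        \<le> ennreal (c2 * exp (c3 * t\<^sup>2 * r * z))"
  shows "ereal (- \<bar>ln c2\<bar> / s + (1 / c1 - c3 * s) * r * z) \<le> renyi_dens (1 - s) M f g
    \<and> renyi_dens (1 + c4) M f g \<le> ereal (\<bar>ln c2\<bar> / c4 + (c1 + c3 * c4) * r * z)"
proof -
  obtain K where K: "KL_dens M f g = ereal K" "z / c1 \<le> K / r" "K / r \<le> c1 * z"
    using KL_lower KL_upper \<open>r > 0\<close> by (rule ereal_divide_bounded_obtain_real)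
  have lower: "(r * z) / c1 \<le> K"
    using K(2) \<open>r > 0\<close> by (simp add: pos_le_divide_eq mult.commute)
  have upper: "K \<le> c1 * (r * z)"
    using K(3) \<open>r > 0\<close> by (simp add: pos_divide_le_eq mult_ac)
  have t_range: "-s \<in> {-c4..c4}" "c4 \<in> {-c4..c4}"
    using \<open>0 < s\<close> \<open>s \<le> c4\<close> by auto
  have moment_lower: "(\<integral>\<^sup>+ y. ennreal (f y * exp (- s * (ln (f y / g y) - K))) \<partial>M)
      \<le> ennreal (c2 * exp (c3 * s\<^sup>2 * (r * z)))"
    using bspec[OF moment t_range(1)] by (simp add: K(1) mult.assoc)
  have moment_upper: "(\<integral>\<^sup>+ y. ennreal (f y * exp (c4 * (ln (f y / g y) - K))) \<partial>M)
      \<le> ennreal (c2 * exp (c3 * c4\<^sup>2 * (r * z)))"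
    using bspec[OF moment t_range(2)] by (simp add: K(1) mult.assoc)
  have "ereal (- \<bar>ln c2\<bar> / s + (1 / c1 - c3 * s) * (r * z)) \<le> renyi_dens (1 - s) M f g"
    by (rule renyi_dens_ge_linear[OF \<open>0 < s\<close> \<open>c2 > 0\<close> lower moment_lower])
  moreover have "renyi_dens (1 + c4) M f g \<le> ereal (\<bar>ln c2\<bar> / c4 + (c1 + c3 * c4) * (r * z))"
    using \<open>0 < s\<close> \<open>s \<le> c4\<close> by (intro renyi_dens_le_linear[OF _ \<open>c2 > 0\<close> upper moment_upper]) simp
  ultimately show ?thesis
    by (simp only: mult.assoc)
qed

end

lemma small_exponent_with_positive_slope:
  fixes c1 c3 c4 :: real
  assumes "c1 > 1" "c3 > 0" "c4 > 0"
  obtains s where "0 < s" "s < 1" "s \<le> c4" "0 < 1 / c1 - c3 * s" "1 / c1 - c3 * s \<le> c1 + c3 * c4"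
proof
  define s where "s = min c4 (min (1 / 2) (1 / (2 * c1 * c3)))"
  show s: "0 < s" "s < 1" "s \<le> c4"
    using assms by (auto simp: s_def)
  have "c3 * s \<le> c3 * (1 / (2 * c1 * c3))"
    using assms by (intro mult_left_mono) (auto simp: s_def)
  then have "c3 * s < 1 / c1"
    using assms by (simp add: field_simps)
  moreover have "1 / c1 < 1" "0 < c3 * c4"
    using assms by auto
  ultimately show "0 < 1 / c1 - c3 * s" "1 / c1 - c3 * s \<le> c1 + c3 * c4"
    using assms s mult_pos_pos[OF assms(2) s(1)] by linarith+
qed

theorem lemma3p1:
  fixes \<mu> :: "nat \<Rightarrow> 'y measure"
    and \<Lambda> :: "nat \<Rightarrow> 'l set"
    and d :: "nat \<Rightarrow> 'l \<Rightarrow> 'l \<Rightarrow> real"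
    and q :: "nat \<Rightarrow> 'l \<Rightarrow> 'y \<Rightarrow> real"
    and c1' c2' c3' c4' :: real
  assumes sfin: "\<And>n. sigma_finite_measure (\<mu> n)"
    and metric: "\<And>n. Metric_space (\<Lambda> n) (d n)"
    and q_meas: "\<And>n l. l \<in> \<Lambda> n \<Longrightarrow> q n l \<in> borel_measurable (\<mu> n)"
    and q_pos: "\<And>n l y. l \<in> \<Lambda> n \<Longrightarrow> y \<in> space (\<mu> n) \<Longrightarrow> q n l y > 0"
    and q_int: "\<And>n l. l \<in> \<Lambda> n \<Longrightarrow> (\<integral>\<^sup>+ y. ennreal (q n l y) \<partial>\<mu> n) = 1"
    and cpos: "c1' > 1" "c2' > 0" "c3' > 0" "c4' > 0"
    and hyp: "\<exists>N. \<forall>n\<ge>N. \<forall>l0\<in>\<Lambda> n. \<forall>l1\<in>\<Lambda> n.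
        ereal ((d n l0 l1)\<^sup>2 / c1') \<le> KL_dens (\<mu> n) (q n l0) (q n l1) / ereal (real n)
      \<and> KL_dens (\<mu> n) (q n l0) (q n l1) / ereal (real n) \<le> ereal (c1' * (d n l0 l1)\<^sup>2)
      \<and> (\<forall>t\<in>{-c4'..c4'}.
           (\<integral>\<^sup>+ y. ennreal (q n l0 y * exp (t * (ln (q n l0 y / q n l1 y)
                 - real_of_ereal (KL_dens (\<mu> n) (q n l0) (q n l1))))) \<partial>\<mu> n)
           \<le> ennreal (c2' * exp (c3' * t\<^sup>2 * real n * (d n l0 l1)\<^sup>2)))"
  shows "\<exists>\<rho>o \<rho>p a1 a2 c1 c2 :: real.
      0 < \<rho>o \<and> \<rho>o < 1 \<and> \<rho>p > 1 \<and> a1 \<le> a2 \<and> 0 < c1 \<and> c1 \<le> c2 \<and>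
      (\<exists>N. \<forall>n\<ge>N. \<forall>l0\<in>\<Lambda> n. \<forall>l1\<in>\<Lambda> n.
         ereal (a1 + c1 * real n * (d n l0 l1)\<^sup>2) \<le> renyi_dens \<rho>o (\<mu> n) (q n l0) (q n l1)
       \<and> renyi_dens \<rho>p (\<mu> n) (q n l0) (q n l1) \<le> ereal (a2 + c2 * real n * (d n l0 l1)\<^sup>2))"
proof -
  obtain s where s: "0 < s" "s < 1" "s \<le> c4'"
    and slopes: "0 < 1 / c1' - c3' * s" "1 / c1' - c3' * s \<le> c1' + c3' * c4'"
    using small_exponent_with_positive_slope[OF cpos(1,3,4)] .
  have "0 \<le> \<bar>ln c2'\<bar> / s" "0 \<le> \<bar>ln c2'\<bar> / c4'"
    using s cpos by simp_all
  then have offsets: "- \<bar>ln c2'\<bar> / s \<le> \<bar>ln c2'\<bar> / c4'"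
    by (subst minus_divide_left[symmetric]) linarith
  have dens: "positive_density_pair (\<mu> n) (q n l0) (q n l1)" if "l0 \<in> \<Lambda> n" "l1 \<in> \<Lambda> n" for n l0 l1
    using that by unfold_locales (simp_all add: q_meas q_pos q_int)
  have "\<forall>\<^sub>F n in sequentially. \<forall>l0\<in>\<Lambda> n. \<forall>l1\<in>\<Lambda> n.
      ereal (- \<bar>ln c2'\<bar> / s + (1 / c1' - c3' * s) * real n * (d n l0 l1)\<^sup>2)
        \<le> renyi_dens (1 - s) (\<mu> n) (q n l0) (q n l1)
    \<and> renyi_dens (1 + c4') (\<mu> n) (q n l0) (q n l1)
        \<le> ereal (\<bar>ln c2'\<bar> / c4' + (c1' + c3' * c4') * real n * (d n l0 l1)\<^sup>2)"
    using hyp[folded eventually_sequentially] eventually_gt_at_top[of 0]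
  proof eventually_elim
    case (elim n)
    then have "0 < real n"
      by simp
    with elim(1) show ?case
      by (intro ballI positive_density_pair.renyi_dens_bounds_of_KL_bounds[OF dens _ s(1) s(3) cpos(2)])
        blast+
  qed
  moreover have "0 < 1 - s" "1 - s < 1" "1 < 1 + c4'"
    using s cpos by auto
  ultimately show ?thesis
    unfolding eventually_sequentially using slopes offsets by blast
qed

end
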